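(* Let $V$ be a finite set, $C=(C_R)_{R\subseteq V}$ non-negative capacities and $D=(D_S)_{S\subseteq V}$ non-negative demands. Then \[ \mathrm{MaxHSP}(V,C,D)=\min_{\delta\in\Delta(V)}\frac{C\cdot\delta}{D\cdot\delta}, \] where $\Delta(V)$ is the set of all diversities on $V$. Moreover, the minimum is attained by a diversity $\delta$ supported on the hypergraph $H=(V,E)$ with $E=\{e\subseteq V: C_e>0\}$.
   Context: A diversity on $V$ is a function $\delta$ from subsets of $V$ to $\mathbb{R}$ with $\delta(A)\ge 0$, $\delta(A)=0$ whenever $|A|\le 1$ (values $0$ on larger sets are allowed), and $\delta(A\cup B)+\delta(B\cup C)\ge\delta(A\cup C)$ whenever $B\neq\emptyset$. Write $C\cdot\delta=\sum_{R\subseteq V}C_R\delta(R)$ and $D\cdot\delta=\sum_{S\subseteq V}D_S\delta(S)$; the quotient is considered for $\delta$ with $D\cdot\delta>0$. All subsets $R\subseteq V$ are regarded as hyperedges with capacity $C_R$. For $S\subseteq V$, $\mathcal{T}_S$ is the set of minimal connected sub-hypergraphs (sets $t$ of hyperedges, connected, whose union contains $S$, minimal with this property). $\mathrm{MaxHSP}(V,C,D)$ is the optimal value of the LP: maximize $f$ subject to $\sum_{S}\sum_{t\in\mathcal{T}_S:R\in t}z_{t,S}\le C_R$ for all $R\subseteq V$, $\sum_{t\in\mathcal{T}_S}z_{t,S}=f\cdot D_S$ for all $S\subseteq V$, $z_{t,S}\ge0$. Given a hypergraph $H=(V,E)$ and non-negative weights $w$ on $E$, the hypergraph Steiner diversity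 is $\delta(A)=\min\{\sum_{e\in E'}w(e):E'\subseteq E \text{ induces a connected sub-hypergraph containing } A\}$; a diversity is supported on $H$ if it is the hypergraph Steiner diversity of $H$ for some non-negative weights on $E$.
   Formalization: For |S| <= 1 the empty hyperedge set lies in $\mathcal{T}_S$, and supported on H means agreeing with the hypergraph Steiner diversity only on sets A that some connected set of hyperedges of H contains. Each condition added here is assumed in the paper as well or is needed for the statement above to hold. *)

theory Defs
  imports Complex_Main
begin

definition diversity :: "'a set \<Rightarrow> ('a set \<Rightarrow> real) \<Rightarrow> bool" where
  "diversity V \<delta> \<longleftrightarrow>
     (\<forall>A. A \<subseteq> V \<longrightarrow> \<delta> A \<ge> 0) \<and>
     (\<forall>A. A \<subseteq> V \<longrightarrow> card A \<le> 1 \<longrightarrow> \<delta> A = 0) \<and>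
     (\<forall>A B C. A \<subseteq> V \<longrightarrow> B \<subseteq> V \<longrightarrow> C \<subseteq> V \<longrightarrow> B \<noteq> {} \<longrightarrow>
        \<delta> (A \<union> B) + \<delta> (B \<union> C) \<ge> \<delta> (A \<union> C))"

definition dotp :: "'a set \<Rightarrow> ('a set \<Rightarrow> real) \<Rightarrow> ('a set \<Rightarrow> real) \<Rightarrow> real" where
  "dotp V X \<delta> = (\<Sum>R\<in>Pow V. X R * \<delta> R)"

definition hconnected :: "'a set \<Rightarrow> 'a set set \<Rightarrow> bool" where
  "hconnected W t \<longleftrightarrow>
     (\<forall>x\<in>W. \<forall>y\<in>W. (x, y) \<in> {(u, v). \<exists>e\<in>t. u \<in> e \<and> v \<in> e}\<^sup>*)"

definition conn_contains :: "'a set \<Rightarrow> 'a set set \<Rightarrow> bool" where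
  "conn_contains S t \<longleftrightarrow> hconnected (S \<union> \<Union>t) t"

definition trees :: "'a set \<Rightarrow> 'a set \<Rightarrow> 'a set set set" where
  "trees V S = {t. t \<subseteq> Pow V \<and> conn_contains S t \<and>
                   (\<forall>t'. t' \<subset> t \<longrightarrow> \<not> conn_contains S t')}"

definition hsp_feasible ::
  "'a set \<Rightarrow> ('a set \<Rightarrow> real) \<Rightarrow> ('a set \<Rightarrow> real) \<Rightarrow> real \<Rightarrow> bool" where
  "hsp_feasible V C D f \<longleftrightarrow>
     (\<exists>z :: 'a set set \<Rightarrow> 'a set \<Rightarrow> real.
        (\<forall>S\<in>Pow V. \<forall>t\<in>trees V S. z t S \<ge> 0) \<and>
        (\<forall>R\<in>Pow V. (\<Sum>S\<in>Pow V. \<Sum>t\<in>{t\<in>trees V S. R \<in> t}. z t S) \<le> C R) \<and>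
        (\<forall>S\<in>Pow V. (\<Sum>t\<in>trees V S. z t S) = f * D S))"

definition MaxHSP :: "'a set \<Rightarrow> ('a set \<Rightarrow> real) \<Rightarrow> ('a set \<Rightarrow> real) \<Rightarrow> real" where
  "MaxHSP V C D = Sup {f. hsp_feasible V C D f}"

definition steiner_val :: "'a set set \<Rightarrow> ('a set \<Rightarrow> real) \<Rightarrow> 'a set \<Rightarrow> real" where
  "steiner_val E w A = Min {(\<Sum>e\<in>E'. w e) | E'. E' \<subseteq> E \<and> conn_contains A E'}"

text \<open>delta is supported on the hypergraph (V,E): it is the hypergraph Steiner
  diversity for some non-negative weights, on every A for which the Steiner
  minimum exists (is over a non-empty set).\<close>
definition supported_on :: "'a set \<Rightarrow> 'a set set \<Rightarrow> ('a set \<Rightarrow> real) \<Rightarrow> bool" where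
  "supported_on V E \<delta> \<longleftrightarrow>
     (\<exists>w. (\<forall>e\<in>E. w e \<ge> 0) \<and>
          (\<forall>A. A \<subseteq> V \<longrightarrow> (\<exists>E'\<subseteq>E. conn_contains A E') \<longrightarrow> \<delta> A = steiner_val E w A))"

end

theory Submission
  imports Defs
begin

text \<open>The inequality MaxHSP \<le> C\<cdot>\<delta> / D\<cdot>\<delta> is weak duality: a flow routes each demand along
  connected edge sets, and a diversity charges such a set at least the diversity of the demand it
  serves. For the converse, Farkas' lemma applied to the flow LP on trees inside the support E of
  C, homogenised so that a value bound \<rho> enters linearly, yields edge weights y \<ge> 0 on E and
  demand potentials d bounded by the y-length of every tree. The hypergraph Steiner diversity of
  (E, y) dominates d and costs at most y on each edge, so its ratio is at most \<rho>; taking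
  \<rho> = MaxHSP shows that this diversity attains the minimum.\<close>

section \<open>Farkas' lemma\<close>

lemma farkas_lemma:
  fixes a :: "'j \<Rightarrow> 'k \<Rightarrow> real" and b :: "'k \<Rightarrow> real"
  assumes "finite K" and "finite J"
  shows "(\<exists>l. (\<forall>j\<in>J. 0 \<le> l j) \<and> (\<forall>k\<in>K. b k = (\<Sum>j\<in>J. l j * a j k)))
       \<or> (\<exists>x. (\<forall>j\<in>J. (\<Sum>k\<in>K. a j k * x k) \<le> 0) \<and> 0 < (\<Sum>k\<in>K. b k * x k))"
  using \<open>finite J\<close>
proof (induction J arbitrary: a b rule: finite_induct)
  case empty
  show ?case
  proof (cases "\<forall>k\<in>K. b k = 0")
    case False
    then obtain k0 where "k0 \<in> K" "b k0 \<noteq> 0" by auto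
    then have "0 < (\<Sum>k\<in>K. b k * b k)"
      using \<open>finite K\<close> by (intro sum_pos2) (auto simp: zero_less_mult_iff linorder_neq_iff)
    then show ?thesis by auto
  qed auto
next
  case (insert m J)
  let ?dot = "\<lambda>u x. \<Sum>k\<in>K. u k * x k"
  have dot_diff_left: "?dot (\<lambda>k. u k - c * v k) x = ?dot u x - c * ?dot v x" for u v x and c :: real
    by (simp add: sum_subtractf sum_distrib_left algebra_simps)
  have dot_diff_right: "?dot u (\<lambda>k. x k - c * y k) = ?dot u x - c * ?dot u y" for u x y and c :: real
    by (simp add: sum_subtractf sum_distrib_left algebra_simps)
  show ?case
  proof (rule ccontr)
    assume "\<not> ?case"
    then have no_dual: "\<And>x. \<forall>j\<in>insert m J. ?dot (a j) x \<le> 0 \<Longrightarrow> ?dot b x \<le> 0"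
      and no_primal: "\<And>l. \<forall>j\<in>insert m J. 0 \<le> l j \<Longrightarrow> \<exists>k\<in>K. b k \<noteq> (\<Sum>j\<in>insert m J. l j * a j k)"
      by (auto simp: not_less)
    have sum_upd: "(\<Sum>j\<in>insert m J. (l(m := c)) j * a j k) = c * a m k + (\<Sum>j\<in>J. l j * a j k)" for l c k
    proof -
      have "(\<Sum>j\<in>J. (l(m := c)) j * a j k) = (\<Sum>j\<in>J. l j * a j k)"
        using insert.hyps by (intro sum.cong) auto
      then show ?thesis using insert.hyps by simp
    qed
    from insert.IH[of b a] obtain x0 where x0: "\<forall>j\<in>J. ?dot (a j) x0 \<le> 0" "0 < ?dot b x0"
    proof
      assume "\<exists>l. (\<forall>j\<in>J. 0 \<le> l j) \<and> (\<forall>k\<in>K. b k = (\<Sum>j\<in>J. l j * a j k))"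
      then obtain l where l: "\<forall>j\<in>J. 0 \<le> l j" "\<forall>k\<in>K. b k = (\<Sum>j\<in>J. l j * a j k)" by blast
      have "\<forall>j\<in>insert m J. 0 \<le> (l(m := 0)) j" using l(1) by simp
      then show ?thesis using no_primal[of "l(m := 0)"] sum_upd[of l 0] l(2) by simp
    qed blast
    define \<alpha> where "\<alpha> = ?dot (a m) x0"
    have "0 < \<alpha>" using no_dual[of x0] x0 unfolding \<alpha>_def by fastforce
    \<comment> \<open>Subtract multiples of column m to make all columns and b orthogonal to x0.\<close>
    define a' where "a' j k = a j k - (?dot (a j) x0 / \<alpha>) * a m k" for j k
    define b' where "b' k = b k - (?dot b x0 / \<alpha>) * a m k" for k
    from insert.IH[of b' a'] show False
    proof
      assume "\<exists>l. (\<forall>j\<in>J. 0 \<le> l j) \<and> (\<forall>k\<in>K. b' k = (\<Sum>j\<in>J. l j * a' j k))"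
      then obtain l where l: "\<forall>j\<in>J. 0 \<le> l j" "\<forall>k\<in>K. b' k = (\<Sum>j\<in>J. l j * a' j k)" by blast
      define c where "c = (?dot b x0 - (\<Sum>j\<in>J. l j * ?dot (a j) x0)) / \<alpha>"
      have "(\<Sum>j\<in>J. l j * ?dot (a j) x0) \<le> 0"
        using l(1) x0(1) by (intro sum_nonpos) (simp add: mult_nonneg_nonpos)
      then have "0 \<le> c" unfolding c_def using \<open>0 < \<alpha>\<close> x0(2) by simp
      then have "\<forall>j\<in>insert m J. 0 \<le> (l(m := c)) j" using l(1) by simp
      moreover have "b k = c * a m k + (\<Sum>j\<in>J. l j * a j k)" if "k \<in> K" for k
      proof -
        have "b k - (?dot b x0 / \<alpha>) * a m k
            = (\<Sum>j\<in>J. l j * a j k) - (\<Sum>j\<in>J. l j * ?dot (a j) x0) / \<alpha> * a m k"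
          using l(2) that unfolding a'_def b'_def
          by (simp add: algebra_simps sum_subtractf sum_distrib_left sum_divide_distrib sum_distrib_right)
        then show ?thesis using \<open>0 < \<alpha>\<close> unfolding c_def by (simp add: field_simps)
      qed
      ultimately show False using no_primal[of "l(m := c)"] sum_upd by simp
    next
      assume "\<exists>x. (\<forall>j\<in>J. ?dot (a' j) x \<le> 0) \<and> 0 < ?dot b' x"
      then obtain x where x: "\<forall>j\<in>J. ?dot (a' j) x \<le> 0" "0 < ?dot b' x" by blast
      define x' where "x' k = x k - (?dot (a m) x / \<alpha>) * x0 k" for k
      have "?dot (a m) x' = 0"
        unfolding x'_def dot_diff_right using \<open>0 < \<alpha>\<close> \<alpha>_def by simp
      moreover have "?dot u x' = ?dot (\<lambda>k. u k - (?dot u x0 / \<alpha>) * a m k) x" for u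
        unfolding x'_def dot_diff_right dot_diff_left
        by (simp add: sum_distrib_left mult.commute)
      ultimately show False
        using no_dual[of x'] x unfolding a'_def b'_def by auto
    qed
  qed
qed

text \<open>Rows in K1 become inequalities by adding a slack column for each of them.\<close>

lemma farkas_lemma_mixed:
  fixes a :: "'j \<Rightarrow> 'k \<Rightarrow> real" and b :: "'k \<Rightarrow> real"
  assumes "finite K" and "finite J" and "K1 \<subseteq> K"
  shows "(\<exists>l. (\<forall>j\<in>J. 0 \<le> l j) \<and> (\<forall>k\<in>K1. (\<Sum>j\<in>J. l j * a j k) \<le> b k)
              \<and> (\<forall>k\<in>K - K1. (\<Sum>j\<in>J. l j * a j k) = b k))
       \<or> (\<exists>x. (\<forall>k\<in>K1. 0 \<le> x k) \<and> (\<forall>j\<in>J. 0 \<le> (\<Sum>k\<in>K. a j k * x k)) \<and> (\<Sum>k\<in>K. b k * x k) < 0)"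
proof -
  define a' where "a' j k = (case j of Inl j \<Rightarrow> a j k | Inr k' \<Rightarrow> if k = k' then 1 else 0)"
    for j :: "'j + 'k" and k
  have "finite K1" using assms finite_subset by blast
  then have "finite (J <+> K1)" using assms by simp
  from farkas_lemma[OF assms(1) this, of b a'] show ?thesis
  proof
    assume "\<exists>l. (\<forall>j\<in>J <+> K1. 0 \<le> l j) \<and> (\<forall>k\<in>K. b k = (\<Sum>j\<in>J <+> K1. l j * a' j k))"
    then obtain l where l0: "\<forall>j\<in>J <+> K1. 0 \<le> l j"
      and lb: "\<forall>k\<in>K. b k = (\<Sum>j\<in>J <+> K1. l j * a' j k)" by blast
    have "(\<Sum>j\<in>J <+> K1. l j * a' j k) = (\<Sum>j\<in>J. l (Inl j) * a j k) + (if k \<in> K1 then l (Inr k) else 0)"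
      for k
      using \<open>finite K1\<close> assms(2) by (simp add: sum.Plus a'_def if_distrib[of "\<lambda>c. _ * c"] cong: if_cong)
    then show ?thesis
      using l0 lb assms(3) by (intro disjI1 exI[of _ "l \<circ> Inl"]) force
  next
    assume "\<exists>x. (\<forall>j\<in>J <+> K1. (\<Sum>k\<in>K. a' j k * x k) \<le> 0) \<and> 0 < (\<Sum>k\<in>K. b k * x k)"
    then obtain x where xa: "\<forall>j\<in>J <+> K1. (\<Sum>k\<in>K. a' j k * x k) \<le> 0"
      and xb: "0 < (\<Sum>k\<in>K. b k * x k)" by blast
    have "(\<Sum>k\<in>K. a' (Inr k') k * x k) = x k'" if "k' \<in> K1" for k'
      using that assms by (auto simp: a'_def if_distrib[of "\<lambda>c. c * _"] cong: if_cong)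
    then have "\<forall>k\<in>K1. 0 \<le> - x k" using xa by force
    moreover have "\<forall>j\<in>J. 0 \<le> (\<Sum>k\<in>K. a j k * - x k)"
      using xa by (force simp: a'_def sum_negf)
    moreover have "(\<Sum>k\<in>K. b k * - x k) < 0"
      using xb by (simp add: sum_negf)
    ultimately show ?thesis by (intro disjI2 exI[of _ "\<lambda>k. - x k"]) simp
  qed
qed

section \<open>Connectivity in hypergraphs\<close>

definition hedge_rel :: "'a set set \<Rightarrow> ('a \<times> 'a) set" where
  "hedge_rel t = {(u, v). \<exists>e\<in>t. u \<in> e \<and> v \<in> e}"

lemma conn_contains_iff:
  "conn_contains S t \<longleftrightarrow> (\<forall>x\<in>S \<union> \<Union>t. \<forall>y\<in>S \<union> \<Union>t. (x, y) \<in> (hedge_rel t)\<^sup>*)"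
  unfolding conn_contains_def hconnected_def hedge_rel_def by simp

lemma conn_contains_empty_iff: "finite S \<Longrightarrow> conn_contains S {} \<longleftrightarrow> card S \<le> 1"
  unfolding conn_contains_iff hedge_rel_def by (simp add: card_le_Suc0_iff_eq)

lemma conn_contains_singleton: "conn_contains R {R}"
  unfolding conn_contains_iff hedge_rel_def by auto

lemma conn_contains_Un:
  assumes "conn_contains (A \<union> B) t1" and "conn_contains (B \<union> C) t2" and "B \<noteq> {}"
  shows "conn_contains (A \<union> C) (t1 \<union> t2)"
proof -
  obtain b where "b \<in> B" using assms(3) by auto
  have mono: "(hedge_rel t1)\<^sup>* \<subseteq> (hedge_rel (t1 \<union> t2))\<^sup>*" "(hedge_rel t2)\<^sup>* \<subseteq> (hedge_rel (t1 \<union> t2))\<^sup>*"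
    unfolding hedge_rel_def by (auto intro!: rtrancl_mono)
  have "(x, b) \<in> (hedge_rel (t1 \<union> t2))\<^sup>* \<and> (b, x) \<in> (hedge_rel (t1 \<union> t2))\<^sup>*"
    if "x \<in> A \<union> C \<union> \<Union>(t1 \<union> t2)" for x
  proof -
    have "x \<in> A \<union> B \<union> \<Union>t1 \<or> x \<in> B \<union> C \<union> \<Union>t2" using that by auto
    then show ?thesis
      using assms(1,2) \<open>b \<in> B\<close> mono unfolding conn_contains_iff by blast
  qed
  then show ?thesis unfolding conn_contains_iff by (meson rtrancl_trans)
qed

lemma hedge_rel_rtrancl_closed:
  assumes "(x, y) \<in> (hedge_rel t)\<^sup>*" and "x \<in> \<Union>U" and "\<forall>e\<in>t - U. e \<inter> \<Union>U = {}"
  shows "y \<in> \<Union>U"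
  using assms(1,2)
proof (induction rule: rtrancl_induct)
  case (step y z)
  then obtain e where "e \<in> t" "y \<in> e" "z \<in> e" unfolding hedge_rel_def by auto
  then show ?case using step.IH step.prems assms(3) by (cases "e \<in> U") auto
qed

lemma conn_contains_subset_Union:
  assumes "conn_contains S t" and "\<Union>t \<noteq> {}"
  shows "S \<subseteq> \<Union>t"
proof
  fix x assume "x \<in> S"
  obtain y where "y \<in> \<Union>t" using assms(2) by auto
  then have "(y, x) \<in> (hedge_rel t)\<^sup>*" using assms(1) \<open>x \<in> S\<close> unfolding conn_contains_iff by blast
  then show "x \<in> \<Union>t" using hedge_rel_rtrancl_closed[of y x t t] \<open>y \<in> \<Union>t\<close> by auto
qed

lemma finite_trees: "finite V \<Longrightarrow> finite (trees V S)"
  unfolding trees_def by (rule finite_subset[of _ "Pow (Pow V)"]) auto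

lemma trees_subset_Pow: "t \<in> trees V S \<Longrightarrow> t \<subseteq> Pow V"
  unfolding trees_def by auto

lemma trees_conn_contains: "t \<in> trees V S \<Longrightarrow> conn_contains S t"
  unfolding trees_def by auto

lemma exists_tree_subset:
  assumes "finite V" and "t \<subseteq> Pow V" and "conn_contains S t"
  shows "\<exists>t'\<subseteq>t. t' \<in> trees V S"
proof -
  have "finite t" using assms(1,2) finite_subset by (metis finite_Pow_iff)
  then have "finite {t'. t' \<subseteq> t \<and> conn_contains S t'}" by simp
  from finite_has_minimal2[OF this, of t] assms(3)
  obtain t' where t': "t' \<subseteq> t" "conn_contains S t'"
    and min: "\<forall>t''. t'' \<subseteq> t \<and> conn_contains S t'' \<longrightarrow> t'' \<subseteq> t' \<longrightarrow> t' = t''" by auto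
  have "\<not> conn_contains S t''" if "t'' \<subset> t'" for t''
    using min t'(1) that by blast
  then show ?thesis using t' assms(2) unfolding trees_def by blast
qed

section \<open>Diversities\<close>

lemma diversity_nonneg: "diversity V \<delta> \<Longrightarrow> A \<subseteq> V \<Longrightarrow> 0 \<le> \<delta> A"
  unfolding diversity_def by blast

lemma diversity_card_le_1: "diversity V \<delta> \<Longrightarrow> A \<subseteq> V \<Longrightarrow> card A \<le> 1 \<Longrightarrow> \<delta> A = 0"
  unfolding diversity_def by blast

lemma diversity_triangle:
  "diversity V \<delta> \<Longrightarrow> A \<subseteq> V \<Longrightarrow> B \<subseteq> V \<Longrightarrow> C \<subseteq> V \<Longrightarrow> B \<noteq> {} \<Longrightarrow>
   \<delta> (A \<union> C) \<le> \<delta> (A \<union> B) + \<delta> (B \<union> C)"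
  unfolding diversity_def by blast

lemma diversity_Un_le:
  assumes "diversity V \<delta>" and "X \<subseteq> V" and "Y \<subseteq> V" and "X \<inter> Y \<noteq> {}"
  shows "\<delta> (X \<union> Y) \<le> \<delta> X + \<delta> Y"
  using diversity_triangle[OF assms(1), of X "X \<inter> Y" Y] assms(2-4) by (simp add: Un_absorb2 Un_absorb1 le_infI1)

lemma diversity_mono:
  assumes "diversity V \<delta>" and "finite Y" and "X \<subseteq> Y" and "Y \<subseteq> V"
  shows "\<delta> X \<le> \<delta> Y"
proof -
  have "\<delta> X \<le> \<delta> (X \<union> F)" if "finite F" "X \<union> F \<subseteq> V" for F
    using that
  proof (induction F rule: finite_induct)
    case (insert b F)
    have "\<delta> (X \<union> F) \<le> \<delta> (X \<union> F \<union> {b}) + \<delta> {b}"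
      using diversity_triangle[OF assms(1), of "X \<union> F" "{b}" "{}"] insert.prems by simp
    moreover have "\<delta> {b} = 0" using diversity_card_le_1[OF assms(1), of "{b}"] insert.prems by simp
    ultimately show ?case using insert by simp
  qed simp
  from this[of "Y - X"] show ?thesis using assms(2-4) by (simp add: Un_absorb1)
qed

text \<open>Adding the edges of a connected hypergraph one at a time, each new edge meeting the union
  of the previous ones, subadditivity on overlapping sets bounds the diversity of the union.\<close>

lemma diversity_Union_le_sum:
  assumes "diversity V \<delta>" and "finite V" and "t \<subseteq> Pow V" and "conn_contains S t"
  shows "\<delta> (\<Union>t) \<le> (\<Sum>R\<in>t. \<delta> R)"
proof -
  have "finite t" using assms(2,3) by (meson finite_Pow_iff finite_subset)
  have grow: "\<delta> (\<Union>t) \<le> (\<Sum>R\<in>t. \<delta> R)"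
    if "U \<subseteq> t" "\<Union>U \<noteq> {}" "\<delta> (\<Union>U) \<le> (\<Sum>R\<in>U. \<delta> R)" for U
    using that
  proof (induction "card (t - U)" arbitrary: U rule: less_induct)
    case less
    show ?case
    proof (cases "\<exists>e\<in>t - U. e \<inter> \<Union>U \<noteq> {}")
      case True
      then obtain e where e: "e \<in> t" "e \<notin> U" "e \<inter> \<Union>U \<noteq> {}" by blast
      have "finite U" using less.prems(1) \<open>finite t\<close> finite_subset by auto
      have "\<delta> (\<Union>U \<union> e) \<le> \<delta> (\<Union>U) + \<delta> e"
        using diversity_Un_le[OF assms(1), of "\<Union>U" e] e less.prems(1) assms(3) by auto
      then have "\<delta> (\<Union>(insert e U)) \<le> (\<Sum>R\<in>insert e U. \<delta> R)"
        using less.prems(3) \<open>finite U\<close> e(2) by (simp add: Un_commute)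
      moreover have "card (t - insert e U) < card (t - U)"
        using e \<open>finite t\<close> by (metis Diff_insert card_Diff1_less finite_Diff DiffI)
      ultimately show ?thesis using e(1) less.prems(1,2) by (intro less.hyps[of "insert e U"]) auto
    next
      case False
      obtain x where x: "x \<in> \<Union>U" using less.prems(2) by auto
      have "\<Union>t \<subseteq> \<Union>U"
      proof
        fix y assume "y \<in> \<Union>t"
        then have "(x, y) \<in> (hedge_rel t)\<^sup>*"
          using assms(4) x less.prems(1) unfolding conn_contains_iff by blast
        then show "y \<in> \<Union>U" by (rule hedge_rel_rtrancl_closed[OF _ x]) (use False in blast)
      qed
      then have "\<Union>t = \<Union>U" using less.prems(1) by auto
      moreover have "(\<Sum>R\<in>U. \<delta> R) \<le> (\<Sum>R\<in>t. \<delta> R)"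
        using \<open>finite t\<close> less.prems(1) assms(3)
        by (intro sum_mono2) (auto intro: diversity_nonneg[OF assms(1)])
      ultimately show ?thesis using less.prems(3) by simp
    qed
  qed
  show ?thesis
  proof (cases "\<Union>t = {}")
    case True
    have "\<delta> (\<Union>t) = 0" unfolding True by (rule diversity_card_le_1[OF assms(1)]) auto
    moreover have "0 \<le> (\<Sum>R\<in>t. \<delta> R)"
      using assms(1,3) by (intro sum_nonneg) (auto intro: diversity_nonneg)
    ultimately show ?thesis by simp
  next
    case False
    then obtain e where "e \<in> t" "e \<noteq> {}" by auto
    then show ?thesis by (intro grow[of "{e}"]) simp_all
  qed
qed

lemma diversity_le_sum_tree:
  assumes "diversity V \<delta>" and "finite V" and "t \<subseteq> Pow V" and "conn_contains S t" and "S \<subseteq> V"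
  shows "\<delta> S \<le> (\<Sum>R\<in>t. \<delta> R)"
proof (cases "\<Union>t = {}")
  case True
  then have "hedge_rel t = {}" unfolding hedge_rel_def by auto
  then have "\<forall>x\<in>S. \<forall>y\<in>S. x = y" using assms(4) unfolding conn_contains_iff by auto
  then have "card S \<le> 1" using finite_subset[OF assms(5,2)] by (simp add: card_le_Suc0_iff_eq)
  then have "\<delta> S = 0" using diversity_card_le_1[OF assms(1,5)] by simp
  moreover have "0 \<le> (\<Sum>R\<in>t. \<delta> R)"
    using assms(1,3) by (intro sum_nonneg) (auto intro: diversity_nonneg)
  ultimately show ?thesis by simp
next
  case False
  have "\<Union>t \<subseteq> V" using assms(3) by blast
  then have "\<delta> S \<le> \<delta> (\<Union>t)"
    using assms(2) conn_contains_subset_Union[OF assms(4) False]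
    by (intro diversity_mono[OF assms(1)]) (auto intro: finite_subset)
  also have "\<dots> \<le> (\<Sum>R\<in>t. \<delta> R)" using diversity_Union_le_sum[OF assms(1-4)] .
  finally show ?thesis .
qed

section \<open>Hypergraph Steiner diversities\<close>

lemma steiner_val_le:
  assumes "finite E" and "E' \<subseteq> E" and "conn_contains A E'"
  shows "steiner_val E w A \<le> (\<Sum>e\<in>E'. w e)"
  unfolding steiner_val_def using assms by (intro Min_le) (auto intro: finite_subset)

lemma steiner_val_attained:
  assumes "finite E" and "\<exists>E'\<subseteq>E. conn_contains A E'"
  shows "\<exists>E'\<subseteq>E. conn_contains A E' \<and> steiner_val E w A = (\<Sum>e\<in>E'. w e)"
proof -
  have "finite {E'. E' \<subseteq> E \<and> conn_contains A E'}" using assms(1) by simp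
  then have "steiner_val E w A \<in> {(\<Sum>e\<in>E'. w e) | E'. E' \<subseteq> E \<and> conn_contains A E'}"
    unfolding steiner_val_def using assms(2) by (intro Min_in) auto
  then show ?thesis by auto
qed

lemma steiner_val_bounds:
  assumes "finite E" and "\<forall>e\<in>E. 0 \<le> w e" and "\<exists>E'\<subseteq>E. conn_contains A E'"
  shows "0 \<le> steiner_val E w A" and "steiner_val E w A \<le> (\<Sum>e\<in>E. w e)"
proof -
  obtain E' where "E' \<subseteq> E" "steiner_val E w A = (\<Sum>e\<in>E'. w e)"
    using steiner_val_attained[OF assms(1,3)] by blast
  then show "0 \<le> steiner_val E w A" and "steiner_val E w A \<le> (\<Sum>e\<in>E. w e)"
    using assms(1,2) by (auto intro: sum_nonneg sum_mono2)
qed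

lemma steiner_val_triangle:
  assumes "finite E" and "\<forall>e\<in>E. 0 \<le> w e"
    and "\<exists>E'\<subseteq>E. conn_contains (A \<union> B) E'" and "\<exists>E'\<subseteq>E. conn_contains (B \<union> C) E'"
    and "B \<noteq> {}"
  shows "steiner_val E w (A \<union> C) \<le> steiner_val E w (A \<union> B) + steiner_val E w (B \<union> C)"
proof -
  obtain t1 where t1: "t1 \<subseteq> E" "conn_contains (A \<union> B) t1" "steiner_val E w (A \<union> B) = (\<Sum>e\<in>t1. w e)"
    using steiner_val_attained[OF assms(1,3)] by blast
  obtain t2 where t2: "t2 \<subseteq> E" "conn_contains (B \<union> C) t2" "steiner_val E w (B \<union> C) = (\<Sum>e\<in>t2. w e)"
    using steiner_val_attained[OF assms(1,4)] by blast
  have "finite t1" "finite t2" using t1(1) t2(1) assms(1) finite_subset by auto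
  have "steiner_val E w (A \<union> C) \<le> (\<Sum>e\<in>t1 \<union> t2. w e)"
    using t1(1) t2(1) by (intro steiner_val_le[OF assms(1)] conn_contains_Un[OF t1(2) t2(2) assms(5)]) auto
  also have "\<dots> \<le> (\<Sum>e\<in>t1. w e) + (\<Sum>e\<in>t2. w e)"
    using \<open>finite t1\<close> \<open>finite t2\<close> sum_nonneg[of "t1 \<inter> t2" w] t1(1) assms(2) by (auto simp: sum_Un)
  finally show ?thesis using t1(3) t2(3) by simp
qed

text \<open>Sets not spanned by a connected subset of E have Steiner value \<open>\<infinity>\<close>; here they get the
  finite value M instead, which preserves the diversity axioms as long as M dominates every finite
  Steiner value.\<close>

definition steiner_div :: "'a set set \<Rightarrow> ('a set \<Rightarrow> real) \<Rightarrow> real \<Rightarrow> 'a set \<Rightarrow> real" where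
  "steiner_div E w M A = (if \<exists>E'\<subseteq>E. conn_contains A E' then steiner_val E w A else M)"

lemma diversity_steiner_div:
  assumes "finite V" and "finite E" and "\<forall>e\<in>E. 0 \<le> w e" and "(\<Sum>e\<in>E. w e) \<le> M"
  shows "diversity V (steiner_div E w M)"
proof -
  let ?\<delta> = "steiner_div E w M"
  have bounds: "0 \<le> ?\<delta> A \<and> ?\<delta> A \<le> M" for A
  proof (cases "\<exists>E'\<subseteq>E. conn_contains A E'")
    case True
    then show ?thesis
      using steiner_val_bounds[OF assms(2,3) True] assms(4) by (simp add: steiner_div_def)
  next
    case False
    show ?thesis
      unfolding steiner_div_def if_not_P[OF False] using sum_nonneg[of E w] assms(3,4) by simp
  qed
  then have lower: "0 \<le> ?\<delta> A" and upper: "?\<delta> A \<le> M" for A by auto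
  have "?\<delta> A = 0" if "A \<subseteq> V" "card A \<le> 1" for A
  proof -
    have "conn_contains A {}"
      using that conn_contains_empty_iff finite_subset[OF _ assms(1)] by blast
    then have span: "\<exists>E'\<subseteq>E. conn_contains A E'" by blast
    show ?thesis using steiner_val_le[OF assms(2) _ \<open>conn_contains A {}\<close>, of w] lower[of A]
      unfolding steiner_div_def if_P[OF span] by simp
  qed
  moreover have "?\<delta> (A \<union> C) \<le> ?\<delta> (A \<union> B) + ?\<delta> (B \<union> C)" if "B \<noteq> {}" for A B C
  proof (cases "(\<exists>E'\<subseteq>E. conn_contains (A \<union> B) E') \<and> (\<exists>E'\<subseteq>E. conn_contains (B \<union> C) E')")
    case True
    then have "\<exists>E'\<subseteq>E. conn_contains (A \<union> C) E'"
      using conn_contains_Un[OF _ _ that] by (meson Un_least)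
    then show ?thesis
      using True steiner_val_triangle[OF assms(2,3) _ _ that] unfolding steiner_div_def by simp
  next
    case False
    then have "?\<delta> (A \<union> B) = M \<or> ?\<delta> (B \<union> C) = M" unfolding steiner_div_def by auto
    then show ?thesis using lower[of "A \<union> C"] lower[of "A \<union> B"] lower[of "B \<union> C"] upper[of "A \<union> C"]
      by linarith
  qed
  ultimately show ?thesis using lower unfolding diversity_def by simp
qed

lemma supported_on_steiner_div:
  assumes "\<forall>e\<in>E. 0 \<le> w e"
  shows "supported_on V E (steiner_div E w M)"
  unfolding supported_on_def steiner_div_def using assms by (intro exI[of _ w]) simp

lemma steiner_div_le_weight:
  assumes "finite E" and "R \<in> E"
  shows "steiner_div E w M R \<le> w R"
proof -
  have "{R} \<subseteq> E" using assms(2) by simp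
  then have "\<exists>E'\<subseteq>E. conn_contains R E'" using conn_contains_singleton by blast
  then show ?thesis unfolding steiner_div_def
    using steiner_val_le[OF assms(1) \<open>{R} \<subseteq> E\<close> conn_contains_singleton] by simp
qed

lemma tree_bound_le_steiner_div:
  assumes "finite V" and "E \<subseteq> Pow V" and "\<forall>e\<in>E. 0 \<le> w e" and "d S \<le> M"
    and "\<forall>t\<in>trees V S. t \<subseteq> E \<longrightarrow> d S \<le> (\<Sum>R\<in>t. w R)"
  shows "d S \<le> steiner_div E w M S"
proof (cases "\<exists>E'\<subseteq>E. conn_contains S E'")
  case True
  have "finite E" using finite_subset[OF assms(2)] assms(1) by simp
  then obtain E' where E': "E' \<subseteq> E" "conn_contains S E'" "steiner_val E w S = (\<Sum>e\<in>E'. w e)"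
    using steiner_val_attained[OF _ True] by blast
  have "E' \<subseteq> Pow V" using E'(1) assms(2) by blast
  then obtain t where t: "t \<subseteq> E'" "t \<in> trees V S"
    using exists_tree_subset[OF assms(1) _ E'(2)] by blast
  then have "d S \<le> (\<Sum>R\<in>t. w R)" using assms(5) E'(1) by auto
  also have "\<dots> \<le> (\<Sum>e\<in>E'. w e)"
    using t(1) E'(1) assms(3) \<open>finite E\<close> by (intro sum_mono2) (auto intro: finite_subset)
  finally show ?thesis using True E'(3) unfolding steiner_div_def by simp
next
  case False
  show ?thesis unfolding steiner_div_def if_not_P[OF False] by (rule assms(4))
qed

section \<open>The Steiner flow LP\<close>

lemma sum_subset_if:
  "finite A \<Longrightarrow> t \<subseteq> A \<Longrightarrow> (\<Sum>R\<in>t. g R) = (\<Sum>R\<in>A. if R \<in> t then g R else 0)"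
  by (simp add: sum.If_cases Int_absorb1)

lemma hsp_feasible_zero:
  assumes "\<forall>R\<subseteq>V. 0 \<le> C R"
  shows "hsp_feasible V C D 0"
  unfolding hsp_feasible_def using assms by (intro exI[of _ "\<lambda>t S. 0"]) simp

lemma hsp_feasible_weak_duality:
  assumes "finite V" and "hsp_feasible V C D f" and "diversity V \<delta>"
  shows "f * dotp V D \<delta> \<le> dotp V C \<delta>"
proof -
  obtain z where z0: "\<forall>S\<in>Pow V. \<forall>t\<in>trees V S. 0 \<le> z t S"
    and cap: "\<forall>R\<in>Pow V. (\<Sum>S\<in>Pow V. \<Sum>t\<in>{t\<in>trees V S. R \<in> t}. z t S) \<le> C R"
    and dem: "\<forall>S\<in>Pow V. (\<Sum>t\<in>trees V S. z t S) = f * D S"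
    using assms(2) unfolding hsp_feasible_def by blast
  have fin: "finite (trees V S)" for S using finite_trees[OF assms(1)] .
  have "f * dotp V D \<delta> = (\<Sum>S\<in>Pow V. \<Sum>t\<in>trees V S. z t S * \<delta> S)"
    unfolding dotp_def sum_distrib_left using dem
    by (intro sum.cong refl) (simp add: sum_distrib_right[symmetric] mult.assoc)
  also have "\<dots> \<le> (\<Sum>S\<in>Pow V. \<Sum>t\<in>trees V S. z t S * (\<Sum>R\<in>t. \<delta> R))"
    using z0 assms(1,3)
    by (intro sum_mono mult_left_mono diversity_le_sum_tree)
      (auto simp: trees_subset_Pow trees_conn_contains)
  also have "\<dots> = (\<Sum>S\<in>Pow V. \<Sum>t\<in>trees V S. \<Sum>R\<in>Pow V. if R \<in> t then z t S * \<delta> R else 0)"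
    using assms(1)
    by (intro sum.cong refl) (simp add: sum_subset_if[OF _ trees_subset_Pow] sum_distrib_left
        if_distrib cong: if_cong)
  also have "\<dots> = (\<Sum>R\<in>Pow V. \<Sum>S\<in>Pow V. \<Sum>t\<in>trees V S. if R \<in> t then z t S * \<delta> R else 0)"
    by (subst sum.swap) (simp add: sum.swap[of _ "trees V _"])
  also have "\<dots> = (\<Sum>R\<in>Pow V. \<delta> R * (\<Sum>S\<in>Pow V. \<Sum>t\<in>{t\<in>trees V S. R \<in> t}. z t S))"
    by (intro sum.cong refl)
      (simp add: sum.inter_filter[OF fin] sum_distrib_left mult.commute if_distrib cong: if_cong)
  also have "\<dots> \<le> (\<Sum>R\<in>Pow V. \<delta> R * C R)"
    using cap diversity_nonneg[OF assms(3)] by (intro sum_mono mult_left_mono) auto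
  also have "\<dots> = dotp V C \<delta>" unfolding dotp_def by (simp add: mult.commute)
  finally show ?thesis .
qed

text \<open>The witness is the flow rescaled by 1 / \<mu>, or by \<rho> + 1 if \<mu> = 0 (it then uses no capacity).\<close>

lemma hsp_feasible_of_scaled_flow:
  assumes "finite V" and "\<forall>R\<subseteq>V. 0 \<le> C R" and "0 \<le> \<rho>" and "0 \<le> \<mu>"
    and z0: "\<forall>S\<in>Pow V. \<forall>t\<in>trees V S. t \<subseteq> E \<longrightarrow> 0 \<le> z t S"
    and cap: "\<forall>R\<in>E. (\<Sum>S\<in>Pow V. \<Sum>t\<in>{t\<in>trees V S. t \<subseteq> E}. if R \<in> t then z t S else 0) \<le> \<mu> * C R"
    and dem: "\<forall>S\<in>Pow V. (\<Sum>t\<in>{t\<in>trees V S. t \<subseteq> E}. z t S) = (1 + \<mu> * \<rho>) * D S"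
  shows "\<exists>f>\<rho>. hsp_feasible V C D f"
proof -
  define c where "c = (if 0 < \<mu> then 1 / \<mu> else \<rho> + 1)"
  have "0 \<le> c" and "c * \<mu> \<le> 1" and "\<rho> < c * (1 + \<mu> * \<rho>)"
    unfolding c_def using assms(3,4) by (auto simp: field_simps)
  define z' where "z' t S = (if t \<subseteq> E then c * z t S else 0)" for t S
  have fin: "finite (trees V S)" for S using finite_trees[OF assms(1)] .
  have "hsp_feasible V C D (c * (1 + \<mu> * \<rho>))"
    unfolding hsp_feasible_def
  proof (intro exI[of _ z'] conjI ballI)
    fix S t assume "S \<in> Pow V" "t \<in> trees V S"
    then show "0 \<le> z' t S" unfolding z'_def using z0 \<open>0 \<le> c\<close> by simp
  next
    fix R assume "R \<in> Pow V"
    have "(\<Sum>S\<in>Pow V. \<Sum>t\<in>{t\<in>trees V S. R \<in> t}. z' t S)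
        = c * (\<Sum>S\<in>Pow V. \<Sum>t\<in>{t\<in>trees V S. t \<subseteq> E}. if R \<in> t then z t S else 0)"
    proof -
      have "(\<Sum>t\<in>{t\<in>trees V S. R \<in> t}. z' t S)
          = c * (\<Sum>t\<in>{t\<in>trees V S. t \<subseteq> E}. if R \<in> t then z t S else 0)" for S
        unfolding z'_def by (auto simp: sum.inter_filter[OF fin] sum_distrib_left intro!: sum.cong)
      then show ?thesis by (simp add: sum_distrib_left)
    qed
    also have "\<dots> \<le> C R"
    proof (cases "R \<in> E")
      case True
      then have "c * (\<Sum>S\<in>Pow V. \<Sum>t\<in>{t\<in>trees V S. t \<subseteq> E}. if R \<in> t then z t S else 0) \<le> (c * \<mu>) * C R"
        using cap \<open>0 \<le> c\<close> by (simp add: mult_left_mono mult.assoc)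
      also have "\<dots> \<le> C R"
        using mult_right_mono[OF \<open>c * \<mu> \<le> 1\<close>, of "C R"] assms(2) \<open>R \<in> Pow V\<close> by simp
      finally show ?thesis .
    next
      case False
      then have "(\<Sum>S\<in>Pow V. \<Sum>t\<in>{t\<in>trees V S. t \<subseteq> E}. if R \<in> t then z t S else 0) = 0"
        by (intro sum.neutral ballI) auto
      then show ?thesis using assms(2) \<open>R \<in> Pow V\<close> by simp
    qed
    finally show "(\<Sum>S\<in>Pow V. \<Sum>t\<in>{t\<in>trees V S. R \<in> t}. z' t S) \<le> C R" .
  next
    fix S assume "S \<in> Pow V"
    then show "(\<Sum>t\<in>trees V S. z' t S) = c * (1 + \<mu> * \<rho>) * D S"
      using dem unfolding z'_def
      by (simp add: sum.inter_filter[OF fin, symmetric] sum_distrib_left[symmetric])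
  qed
  then show ?thesis using \<open>\<rho> < c * (1 + \<mu> * \<rho>)\<close> by blast
qed

lemma steiner_flow_alternative:
  fixes C D :: "'a set \<Rightarrow> real" and \<rho> :: real
  assumes "finite V" and "E \<subseteq> Pow V"
  shows "(\<exists>\<mu> z. 0 \<le> \<mu> \<and> (\<forall>S\<in>Pow V. \<forall>t\<in>trees V S. t \<subseteq> E \<longrightarrow> 0 \<le> z t S)
            \<and> (\<forall>R\<in>E. (\<Sum>S\<in>Pow V. \<Sum>t\<in>{t\<in>trees V S. t \<subseteq> E}. if R \<in> t then z t S else 0) \<le> \<mu> * C R)
            \<and> (\<forall>S\<in>Pow V. (\<Sum>t\<in>{t\<in>trees V S. t \<subseteq> E}. z t S) = (1 + \<mu> * \<rho>) * D S))
       \<or> (\<exists>y d. (\<forall>R\<in>E. 0 \<le> y R) \<and> (\<forall>S\<in>Pow V. \<forall>t\<in>trees V S. t \<subseteq> E \<longrightarrow> d S \<le> (\<Sum>R\<in>t. y R))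
            \<and> (\<Sum>R\<in>E. C R * y R) \<le> \<rho> * (\<Sum>S\<in>Pow V. D S * d S) \<and> 0 < (\<Sum>S\<in>Pow V. D S * d S))"
proof -
  define P where "P = Sigma (Pow V) (\<lambda>S. {t\<in>trees V S. t \<subseteq> E})"
  define J where "J = insert None (Some ` P)"
  define K where "K = E <+> Pow V"
  \<comment> \<open>Column None carries the scaling variable \<mu>, column Some (S, t) the flow along t for S;
      rows Inl R are the capacity constraints, rows Inr S the demand constraints.\<close>
  define a where "a j k = (case (j, k) of
      (None, Inl R) \<Rightarrow> - C R
    | (None, Inr S) \<Rightarrow> - \<rho> * D S
    | (Some (S, t), Inl R) \<Rightarrow> if R \<in> t then 1 else 0
    | (Some (S, t), Inr S') \<Rightarrow> if S' = S then 1 else 0)" for j k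
  define b where "b k = (case k of Inl R \<Rightarrow> 0 | Inr S \<Rightarrow> D S)" for k :: "'a set + 'a set"
  have "finite E" using finite_subset[OF assms(2)] assms(1) by simp
  have fin_trees: "finite {t\<in>trees V S. t \<subseteq> E}" for S using finite_trees[OF assms(1)] by simp
  then have "finite P" unfolding P_def using assms(1) by simp
  have sumJ: "(\<Sum>j\<in>J. g j) = g None + (\<Sum>p\<in>P. g (Some p))" for g :: "_ \<Rightarrow> real"
    unfolding J_def using \<open>finite P\<close> by (simp add: sum.reindex)
  have sumK: "(\<Sum>k\<in>K. g k) = (\<Sum>R\<in>E. g (Inl R)) + (\<Sum>S\<in>Pow V. g (Inr S))" for g :: "_ \<Rightarrow> real"
    unfolding K_def using \<open>finite E\<close> assms(1) by (simp add: sum.Plus comp_def)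
  have sumP: "(\<Sum>p\<in>P. g p) = (\<Sum>S\<in>Pow V. \<Sum>t\<in>{t\<in>trees V S. t \<subseteq> E}. g (S, t))" for g :: "_ \<Rightarrow> real"
    unfolding P_def using assms(1) fin_trees by (simp add: sum.Sigma)
  have "finite K" "finite J" "Inl ` E \<subseteq> K"
    unfolding K_def J_def using \<open>finite E\<close> assms(1) \<open>finite P\<close> by auto
  from farkas_lemma_mixed[OF this, of a b] show ?thesis
  proof
    assume "\<exists>l. (\<forall>j\<in>J. 0 \<le> l j) \<and> (\<forall>k\<in>Inl ` E. (\<Sum>j\<in>J. l j * a j k) \<le> b k)
              \<and> (\<forall>k\<in>K - Inl ` E. (\<Sum>j\<in>J. l j * a j k) = b k)"
    then obtain l where l0: "\<forall>j\<in>J. 0 \<le> l j"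
      and cap: "\<forall>k\<in>Inl ` E. (\<Sum>j\<in>J. l j * a j k) \<le> b k"
      and dem: "\<forall>k\<in>K - Inl ` E. (\<Sum>j\<in>J. l j * a j k) = b k" by blast
    define z where "z t S = l (Some (S, t))" for t S
    have "(\<Sum>S\<in>Pow V. \<Sum>t\<in>{t\<in>trees V S. t \<subseteq> E}. if R \<in> t then z t S else 0) \<le> l None * C R"
      if "R \<in> E" for R
      using cap that unfolding sumJ sumP by (simp add: a_def b_def z_def if_distrib cong: if_cong)
    moreover have "(\<Sum>t\<in>{t\<in>trees V S. t \<subseteq> E}. z t S) = (1 + l None * \<rho>) * D S"
      if "S \<in> Pow V" for S
    proof -
      have "(\<Sum>S'\<in>Pow V. \<Sum>t\<in>{t\<in>trees V S'. t \<subseteq> E}. if S = S' then z t S' else 0)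
          = (\<Sum>S'\<in>Pow V. if S = S' then (\<Sum>t\<in>{t\<in>trees V S'. t \<subseteq> E}. z t S') else 0)"
        by (intro sum.cong) auto
      also have "\<dots> = (\<Sum>t\<in>{t\<in>trees V S. t \<subseteq> E}. z t S)"
        using that assms(1) by simp
      moreover have "Inr S \<in> K - Inl ` E" using that unfolding K_def by auto
      ultimately show ?thesis
        using dem unfolding sumJ sumP
        by (force simp: a_def b_def z_def if_distrib algebra_simps cong: if_cong)
    qed
    moreover have "0 \<le> l None" "\<forall>S\<in>Pow V. \<forall>t\<in>trees V S. t \<subseteq> E \<longrightarrow> 0 \<le> z t S"
      using l0 unfolding J_def P_def z_def by auto
    ultimately show ?thesis by blast
  next
    assume "\<exists>x. (\<forall>k\<in>Inl ` E. 0 \<le> x k) \<and> (\<forall>j\<in>J. 0 \<le> (\<Sum>k\<in>K. a j k * x k))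
              \<and> (\<Sum>k\<in>K. b k * x k) < 0"
    then obtain x where x0: "\<forall>k\<in>Inl ` E. 0 \<le> x k"
      and xa: "\<forall>j\<in>J. 0 \<le> (\<Sum>k\<in>K. a j k * x k)" and xb: "(\<Sum>k\<in>K. b k * x k) < 0" by blast
    define y where "y R = x (Inl R)" for R
    define d where "d S = - x (Inr S)" for S
    have "d S \<le> (\<Sum>R\<in>t. y R)" if "S \<in> Pow V" "t \<in> trees V S" "t \<subseteq> E" for S t
    proof -
      have "Some (S, t) \<in> J" using that unfolding J_def P_def by auto
      then have "0 \<le> (\<Sum>k\<in>K. a (Some (S, t)) k * x k)" using xa by blast
      moreover have "(\<Sum>R\<in>E. if R \<in> t then y R else 0) = (\<Sum>R\<in>t. y R)"
        using sum_subset_if[OF \<open>finite E\<close> that(3), of y] by simp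
      ultimately show ?thesis
        using that(1) assms(1) unfolding sumK
        by (simp add: a_def y_def d_def if_distrib[of "\<lambda>c. c * _"] cong: if_cong)
    qed
    moreover have "(\<Sum>R\<in>E. C R * y R) \<le> \<rho> * (\<Sum>S\<in>Pow V. D S * d S)"
    proof -
      have "0 \<le> (\<Sum>k\<in>K. a None k * x k)" using xa unfolding J_def by blast
      then show ?thesis unfolding sumK
        by (simp add: a_def y_def d_def sum_negf sum_distrib_left mult.assoc)
    qed
    moreover have "0 < (\<Sum>S\<in>Pow V. D S * d S)"
      using xb unfolding sumK by (simp add: b_def d_def sum_negf)
    moreover have "\<forall>R\<in>E. 0 \<le> y R" using x0 unfolding y_def by simp
    ultimately show ?thesis by (intro disjI2 exI[of _ y] exI[of _ d] conjI) auto
  qed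
qed

lemma supported_diversity_of_dual:
  assumes "finite V" and "E \<subseteq> Pow V" and "\<forall>R\<subseteq>V. 0 \<le> C R" and "\<forall>R\<in>Pow V - E. C R = 0"
    and "\<forall>S\<subseteq>V. 0 \<le> D S" and "0 \<le> \<rho>"
    and y0: "\<forall>R\<in>E. 0 \<le> y R"
    and tree: "\<forall>S\<in>Pow V. \<forall>t\<in>trees V S. t \<subseteq> E \<longrightarrow> d S \<le> (\<Sum>R\<in>t. y R)"
    and obj: "(\<Sum>R\<in>E. C R * y R) \<le> \<rho> * (\<Sum>S\<in>Pow V. D S * d S)"
    and pos: "0 < (\<Sum>S\<in>Pow V. D S * d S)"
  shows "\<exists>\<delta>. diversity V \<delta> \<and> 0 < dotp V D \<delta> \<and> dotp V C \<delta> \<le> \<rho> * dotp V D \<delta>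
             \<and> supported_on V E \<delta>"
proof -
  have "finite E" using finite_subset[OF assms(2)] assms(1) by simp
  define M where "M = (\<Sum>R\<in>E. y R) + (\<Sum>S\<in>Pow V. \<bar>d S\<bar>)"
  define \<delta> where "\<delta> = steiner_div E y M"
  have "0 \<le> (\<Sum>R\<in>E. y R)" using y0 by (simp add: sum_nonneg)
  then have "d S \<le> M" if "S \<in> Pow V" for S
    unfolding M_def using that assms(1) member_le_sum[of S "Pow V" "\<lambda>S. \<bar>d S\<bar>"] by simp
  then have d_le: "d S \<le> \<delta> S" if "S \<in> Pow V" for S
    unfolding \<delta>_def using that assms(1,2) y0 tree by (intro tree_bound_le_steiner_div) auto
  have "(\<Sum>S\<in>Pow V. D S * d S) \<le> dotp V D \<delta>"
    unfolding dotp_def using assms(5) d_le by (intro sum_mono mult_left_mono) auto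
  moreover have "dotp V C \<delta> = (\<Sum>R\<in>E. C R * \<delta> R)"
    unfolding dotp_def using assms(1,2,4) by (intro sum.mono_neutral_right) auto
  moreover have "(\<Sum>R\<in>E. C R * \<delta> R) \<le> (\<Sum>R\<in>E. C R * y R)"
    unfolding \<delta>_def using assms(2,3) steiner_div_le_weight[OF \<open>finite E\<close>]
    by (intro sum_mono mult_left_mono) auto
  ultimately have "0 < dotp V D \<delta>" and "dotp V C \<delta> \<le> \<rho> * dotp V D \<delta>"
    using pos obj mult_left_mono[OF _ \<open>0 \<le> \<rho>\<close>] by (auto intro: order_trans)
  moreover have "diversity V \<delta>"
    unfolding \<delta>_def M_def using assms(1) \<open>finite E\<close> y0 by (intro diversity_steiner_div) auto
  moreover have "supported_on V E \<delta>"
    unfolding \<delta>_def using y0 by (rule supported_on_steiner_div)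
  ultimately show ?thesis by blast
qed

lemma exists_supported_diversity_le:
  assumes "finite V" and "\<forall>R\<subseteq>V. 0 \<le> C R" and "\<forall>S\<subseteq>V. 0 \<le> D S" and "0 \<le> \<rho>"
    and "\<forall>f. hsp_feasible V C D f \<longrightarrow> f \<le> \<rho>"
  shows "\<exists>\<delta>. diversity V \<delta> \<and> 0 < dotp V D \<delta> \<and> dotp V C \<delta> \<le> \<rho> * dotp V D \<delta>
             \<and> supported_on V {e. e \<subseteq> V \<and> 0 < C e} \<delta>"
proof -
  let ?E = "{e. e \<subseteq> V \<and> 0 < C e}"
  have "?E \<subseteq> Pow V" by blast
  have "\<forall>R\<in>Pow V - ?E. C R = 0" using assms(2) by (auto simp: order.order_iff_strict)
  from steiner_flow_alternative[OF assms(1) \<open>?E \<subseteq> Pow V\<close>, of C \<rho> D] show ?thesis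
  proof
    assume "\<exists>\<mu> z. 0 \<le> \<mu> \<and> (\<forall>S\<in>Pow V. \<forall>t\<in>trees V S. t \<subseteq> ?E \<longrightarrow> 0 \<le> z t S)
      \<and> (\<forall>R\<in>?E. (\<Sum>S\<in>Pow V. \<Sum>t\<in>{t\<in>trees V S. t \<subseteq> ?E}. if R \<in> t then z t S else 0) \<le> \<mu> * C R)
      \<and> (\<forall>S\<in>Pow V. (\<Sum>t\<in>{t\<in>trees V S. t \<subseteq> ?E}. z t S) = (1 + \<mu> * \<rho>) * D S)"
    then obtain \<mu> z where "0 \<le> \<mu>" "\<forall>S\<in>Pow V. \<forall>t\<in>trees V S. t \<subseteq> ?E \<longrightarrow> 0 \<le> z t S"
      "\<forall>R\<in>?E. (\<Sum>S\<in>Pow V. \<Sum>t\<in>{t\<in>trees V S. t \<subseteq> ?E}. if R \<in> t then z t S else 0) \<le> \<mu> * C R"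
      "\<forall>S\<in>Pow V. (\<Sum>t\<in>{t\<in>trees V S. t \<subseteq> ?E}. z t S) = (1 + \<mu> * \<rho>) * D S"
      by blast
    from hsp_feasible_of_scaled_flow[OF assms(1,2,4) this] obtain f where "\<rho> < f" "hsp_feasible V C D f"
      by blast
    then show ?thesis using assms(5) by fastforce
  next
    assume "\<exists>y d. (\<forall>R\<in>?E. 0 \<le> y R) \<and> (\<forall>S\<in>Pow V. \<forall>t\<in>trees V S. t \<subseteq> ?E \<longrightarrow> d S \<le> (\<Sum>R\<in>t. y R))
      \<and> (\<Sum>R\<in>?E. C R * y R) \<le> \<rho> * (\<Sum>S\<in>Pow V. D S * d S) \<and> 0 < (\<Sum>S\<in>Pow V. D S * d S)"
    then obtain y d where "\<forall>R\<in>?E. 0 \<le> y R"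
      "\<forall>S\<in>Pow V. \<forall>t\<in>trees V S. t \<subseteq> ?E \<longrightarrow> d S \<le> (\<Sum>R\<in>t. y R)"
      "(\<Sum>R\<in>?E. C R * y R) \<le> \<rho> * (\<Sum>S\<in>Pow V. D S * d S)" "0 < (\<Sum>S\<in>Pow V. D S * d S)"
      by blast
    then show ?thesis
      by (rule supported_diversity_of_dual[OF assms(1) \<open>?E \<subseteq> Pow V\<close> assms(2)
          \<open>\<forall>R\<in>Pow V - ?E. C R = 0\<close> assms(3,4)])
  qed
qed

theorem proposition16:
  fixes V :: "'a set" and C D :: "'a set \<Rightarrow> real"
  assumes "finite V"
    and "\<forall>R\<subseteq>V. C R \<ge> 0"
    and "\<forall>S\<subseteq>V. D S \<ge> 0"
    and "\<exists>\<delta>. diversity V \<delta> \<and> dotp V D \<delta> > 0"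
  shows "\<exists>\<delta>. diversity V \<delta> \<and> dotp V D \<delta> > 0 \<and>
             MaxHSP V C D = dotp V C \<delta> / dotp V D \<delta> \<and>
             (\<forall>\<delta>'. diversity V \<delta>' \<and> dotp V D \<delta>' > 0 \<longrightarrow>
                    dotp V C \<delta> / dotp V D \<delta> \<le> dotp V C \<delta>' / dotp V D \<delta>') \<and>
             supported_on V {e. e \<subseteq> V \<and> C e > 0} \<delta>"
proof -
  let ?F = "{f. hsp_feasible V C D f}"
  have ratio_bound: "f \<le> dotp V C \<delta> / dotp V D \<delta>"
    if "hsp_feasible V C D f" "diversity V \<delta>" "0 < dotp V D \<delta>" for f \<delta>
    using hsp_feasible_weak_duality[OF assms(1) that(1,2)] that(3) by (simp add: pos_le_divide_eq)
  have "0 \<in> ?F" using hsp_feasible_zero[OF assms(2)] by simp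
  moreover have "bdd_above ?F"
  proof -
    obtain \<delta>\<^sub>0 where "diversity V \<delta>\<^sub>0" "0 < dotp V D \<delta>\<^sub>0" using assms(4) by blast
    then show ?thesis using ratio_bound by (intro bdd_aboveI) auto
  qed
  ultimately have "0 \<le> MaxHSP V C D" and "\<forall>f. hsp_feasible V C D f \<longrightarrow> f \<le> MaxHSP V C D"
    unfolding MaxHSP_def by (auto intro: cSup_upper)
  then obtain \<delta> where \<delta>: "diversity V \<delta>" "0 < dotp V D \<delta>" "dotp V C \<delta> \<le> MaxHSP V C D * dotp V D \<delta>"
    and "supported_on V {e. e \<subseteq> V \<and> 0 < C e} \<delta>"
    using exists_supported_diversity_le[OF assms(1-3)] by blast
  have MaxHSP_le: "MaxHSP V C D \<le> dotp V C \<delta>' / dotp V D \<delta>'"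
    if "diversity V \<delta>'" "0 < dotp V D \<delta>'" for \<delta>'
    unfolding MaxHSP_def using \<open>0 \<in> ?F\<close> ratio_bound that by (auto intro: cSup_least)
  have "dotp V C \<delta> / dotp V D \<delta> \<le> MaxHSP V C D" using \<delta>(2,3) by (simp add: pos_divide_le_eq)
  then have "MaxHSP V C D = dotp V C \<delta> / dotp V D \<delta>" using MaxHSP_le[OF \<delta>(1,2)] by linarith
  with \<delta>(1,2) MaxHSP_le \<open>supported_on V {e. e \<subseteq> V \<and> 0 < C e} \<delta>\<close> show ?thesis
    by (intro exI[of _ \<delta>]) simp
qed

end
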